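(* Under Assumption 1, for any choice of admissible input shares $a=(a_i)_{i\in M}$ and productivities $\lambda_i(a_i)>0$, the economy $\mathcal{E}(\lambda,a)$ has a general equilibrium, unique up to price normalization. Normalizing $p_0=1$: (1) the equilibrium revenues $\bar v_i:=\bar p_i\bar y_i$ ($i\in M$) satisfy $\begin{pmatrix}1\\ \bar v\end{pmatrix}=\tilde A\begin{pmatrix}1\\ \bar v\end{pmatrix}$, i.e. for all $j\in M$, $\bar v_j=a_{0,j}+a_{0,j}\sum_{i\in M}\varepsilon_i\bar v_i+\sum_{i\in M}a_{i,j}\bar v_i$, and $\sum_{i\in M}a_{i,0}\bar v_i=1$; (2) equilibrium profits are $\bar\pi_i=(1-\sum_{j\in N}a_{i,j})\bar v_i=(1-\sum_\ell b_{i,\ell})\bar v_i$; (3) equilibrium prices satisfy $\log(\bar p)=(A-I)^{-1}u+(A-I)^{-1}D\log(\bar v)$, where $\log(\bar p)$, $\log(\bar v)$ are taken coordinatewise over $M$, $u_i=\log\lambda_i(a_i)+\sum_{j\in N}a_{i,j}\log a_{i,j}$ (with $0\log 0=0$), and $D=\mathrm{diag}\big(\sum_{j\in N}a_{i,j}-1\big)_{i\in M}$.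
   Context: Economy: a representative household indexed $0$ and firms $M=\{1,\dots,m\}$; $N=M\cup\{0\}$, where index $0$ also denotes the labor good. Sectors: labor is sector $0$ with $M_0=\{0\}$; $M_\ell$ is the set of firms of sector $\ell$. The household supplies one unit of labor, receives all firms' profits, and has utility $u(x_0)=\prod_{j\in M}x_{0,j}^{a_{0,j}}$ with $a_0\in\mathbb{R}^M_+$, $\sum_j a_{0,j}=1$. Each firm $i$ has requirement vector $b_i\ge0$, $\sum_\ell b_{i,\ell}\le1$, and input shares $a_i\in\mathbb{R}^N_+$ with $\sum_{j\in M_\ell}a_{i,j}=b_{i,\ell}$ for every sector $\ell$; its production function is $f_{a,i}(x_i)=\lambda_i(a_i)\prod_{j\in N}x_{i,j}^{a_{i,j}}$. $\varepsilon_i:=1-\sum_{j\in N}a_{i,j}$. $A=(a_{i,j})_{i,j\in M}$. The economy $\mathcal{E}(\lambda,a)$: a general equilibrium is $(\bar p,\bar x,\bar y)$ with $\bar p\in\mathbb{R}^N_+$, $\bar y_0=1$, such that each firm $i$ maximizes $\bar p_iy_i-\bar p\cdot x_i$ subject to $y_i=f_{a,i}(x_i)$; the household maximizes $u(x_0)$ subject to $\bar p\cdot x_0\le \bar p_0+\sum_{j\in M}(\bar p_j\bar y_j-\bar p\cdot\bar x_j)$; and markets clear: $\sum_{j\in N}\bar x_{j,i}=\bar y_i$ for all $i\in N$. The matrix $\tilde A$ on $N\times N$: $\tilde A_{0,0}=0$, $\tilde A_{0,j}=a_{j,0}$, $\tilde A_{i,0}=a_{0,i}$, $\tilde A_{i,j}=a_{j,i}+\varepsilon_ja_{0,i}$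 ($i,j\in M$). Assumption 1: $a_0\in\mathbb{R}^M_{++}$; $b_{i,0}>0$ for all $i$; some firm $i_0$ has $b_{i_0,\ell}>0$ for some sector $\ell\ne0$. *)

theory Defs
  imports "HOL-Analysis.Analysis"
begin

text \<open>Firms are the elements of a finite type 'n (the set M).
 Goods/agents N = M \<union> {0} are modelled by the type 'n option:
 None is the household / labor good (index 0), Some i is firm i / its good.
 Non-labor sectors are the elements of a finite type 's; sec i is the sector of firm i,
 so M_l = {i. sec i = l}. Sector indices are 's option, None being the labor sector 0
 with M_0 = {0}.\<close>

text \<open>Power with the Cobb-Douglas convention 0^0 = 1 (Isabelle's powr has 0 powr 0 = 0).\<close>
definition cpow :: "real \<Rightarrow> real \<Rightarrow> real" where
  "cpow x e = (if e = 0 then 1 else x powr e)"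

definition xlogx :: "real \<Rightarrow> real" where
  "xlogx t = (if t = 0 then 0 else t * ln t)"

definition utility :: "('n::finite \<Rightarrow> real) \<Rightarrow> ('n option \<Rightarrow> real) \<Rightarrow> real" where
  "utility a0 x0 = (\<Prod>j\<in>UNIV. cpow (x0 (Some j)) (a0 j))"

definition prodfun :: "('n::finite \<Rightarrow> real) \<Rightarrow> ('n \<Rightarrow> 'n option \<Rightarrow> real) \<Rightarrow> 'n
                        \<Rightarrow> ('n option \<Rightarrow> real) \<Rightarrow> real" where
  "prodfun lam a i xi = lam i * (\<Prod>j\<in>UNIV. cpow (xi j) (a i j))"

definition eps :: "('n::finite \<Rightarrow> 'n option \<Rightarrow> real) \<Rightarrow> 'n \<Rightarrow> real" where
  "eps a i = 1 - (\<Sum>j\<in>UNIV. a i j)"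

definition nonneg :: "('a \<Rightarrow> real) \<Rightarrow> bool" where
  "nonneg z \<longleftrightarrow> (\<forall>k. 0 \<le> z k)"

definition dotp :: "('n::finite option \<Rightarrow> real) \<Rightarrow> ('n option \<Rightarrow> real) \<Rightarrow> real" where
  "dotp p z = (\<Sum>j\<in>UNIV. p j * z j)"

definition profit :: "('n::finite option \<Rightarrow> real) \<Rightarrow> 'n \<Rightarrow> real \<Rightarrow> ('n option \<Rightarrow> real) \<Rightarrow> real" where
  "profit p i yi xi = p (Some i) * yi - dotp p xi"

definition income :: "('n::finite option \<Rightarrow> real) \<Rightarrow> ('n option \<Rightarrow> 'n option \<Rightarrow> real)
                       \<Rightarrow> ('n option \<Rightarrow> real) \<Rightarrow> real" where
  "income p x y = p None + (\<Sum>j\<in>UNIV. profit p j (y (Some j)) (x (Some j)))"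

text \<open>General equilibrium (p, x, y) of the economy E(lambda, a); x agent good is the
 input (resp. consumption) of good 'good' by agent 'agent'; y agent is the output,
 with y None = 1 the household's labor endowment.\<close>
definition general_equilibrium ::
  "('n::finite \<Rightarrow> real) \<Rightarrow> ('n \<Rightarrow> real) \<Rightarrow> ('n \<Rightarrow> 'n option \<Rightarrow> real)
   \<Rightarrow> ('n option \<Rightarrow> real) \<Rightarrow> ('n option \<Rightarrow> 'n option \<Rightarrow> real) \<Rightarrow> ('n option \<Rightarrow> real) \<Rightarrow> bool" where
  "general_equilibrium a0 lam a p x y \<longleftrightarrow>
     nonneg p \<and> y None = 1 \<and>
     (\<forall>i. nonneg (x (Some i)) \<and> y (Some i) = prodfun lam a i (x (Some i)) \<and>
          (\<forall>xi. nonneg xi \<longrightarrow>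
                profit p i (prodfun lam a i xi) xi \<le> profit p i (y (Some i)) (x (Some i)))) \<and>
     nonneg (x None) \<and> dotp p (x None) \<le> income p x y \<and>
     (\<forall>x0. nonneg x0 \<longrightarrow> dotp p x0 \<le> income p x y \<longrightarrow> utility a0 x0 \<le> utility a0 (x None)) \<and>
     (\<forall>g. (\<Sum>j\<in>UNIV. x j g) = y g)"

definition admissible ::
  "('n::finite \<Rightarrow> 's::finite) \<Rightarrow> ('n \<Rightarrow> 's option \<Rightarrow> real) \<Rightarrow> ('n \<Rightarrow> 'n option \<Rightarrow> real) \<Rightarrow> bool" where
  "admissible sec b a \<longleftrightarrow>
     (\<forall>i. nonneg (a i) \<and> a i None = b i None \<and>
          (\<forall>l. (\<Sum>j\<in>{j. sec j = l}. a i (Some j)) = b i (Some l)))"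

definition shareA :: "('n::finite \<Rightarrow> 'n option \<Rightarrow> real) \<Rightarrow> real^'n^'n" where
  "shareA a = (\<chi> i j. a i (Some j))"

end

theory Submission
  imports Defs
begin

text \<open>With Cobb-Douglas technologies and preferences, optimal behaviour means spending fixed
  shares of revenue (resp. income) on each input (resp. good): necessity follows from first-order
  conditions along one-parameter rescalings of an optimal bundle, sufficiency from weighted AM-GM.
  Prices are positive because utility is strictly increasing and labor is essential in production.
  Normalising the wage to 1, market clearing then becomes a linear equation
  \<open>v = a0 + a0 * (\<Sum>i. eps i * v i) + A\<^sup>T v\<close> for the revenues \<open>v\<close>; its operator is monotone and
  leaks the positive labor share of every revenue, so the equation has a unique solution, which
  is positive.  Logarithms of the production functions give the linear system
  \<open>(A - I) log p = u + D log v\<close>, and \<open>A - I\<close> is invertible because every row sum of \<open>A\<close> is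
  less than one.  Hence revenues determine prices and then all quantities, which gives
  uniqueness; conversely the prices solving this system, together with the cost-share demands,
  form an equilibrium.\<close>

section \<open>Cobb-Douglas powers and weighted AM-GM\<close>

lemma sum_UNIV_option:
  fixes f :: "'a::finite option \<Rightarrow> 'b::comm_monoid_add"
  shows "(\<Sum>k\<in>UNIV. f k) = f None + (\<Sum>j\<in>UNIV. f (Some j))"
  by (simp add: UNIV_option_conv sum.reindex)

lemma prod_UNIV_option:
  fixes f :: "'a::finite option \<Rightarrow> 'b::comm_monoid_mult"
  shows "(\<Prod>k\<in>UNIV. f k) = f None * (\<Prod>j\<in>UNIV. f (Some j))"
  by (simp add: UNIV_option_conv prod.reindex)

lemma cpow_nonneg: "0 \<le> x \<Longrightarrow> 0 \<le> cpow x e"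
  by (simp add: cpow_def)

lemma cpow_pos: "0 < x \<Longrightarrow> 0 < cpow x e"
  by (simp add: cpow_def)

lemma cpow_0_left: "e \<noteq> 0 \<Longrightarrow> cpow 0 e = 0"
  by (simp add: cpow_def)

lemma cpow_1_left: "cpow 1 e = 1"
  by (simp add: cpow_def)

lemma cpow_mult: "cpow (x * y) e = cpow x e * cpow y e"
  by (simp add: cpow_def powr_mult)

lemma cpow_eq_powr: "0 < x \<Longrightarrow> cpow x e = x powr e"
  by (simp add: cpow_def)

lemma prod_cpow_eq_0:
  assumes "finite A" "k \<in> A" "x k = 0" "e k \<noteq> 0"
  shows "(\<Prod>j\<in>A. cpow (x j) (e j)) = 0"
  using assms by (intro prod_zero) (auto intro!: bexI[of _ k] simp: cpow_0_left)

lemma prod_cpow_mult: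
  "(\<Prod>j\<in>A. cpow (c j * x j) (e j)) = (\<Prod>j\<in>A. cpow (c j) (e j)) * (\<Prod>j\<in>A. cpow (x j) (e j))"
  by (simp add: cpow_mult prod.distrib)

text \<open>The tangent line bound \<open>ln (z / M) \<le> z / M - 1\<close>, weighted by \<open>\<alpha> k\<close> and with the
  deficit \<open>1 - \<Sum>\<alpha>\<close> as weight of \<open>1 / M\<close>.\<close>
lemma weighted_sum_ln_le_ln_am:
  fixes \<alpha> z :: "'k \<Rightarrow> real"
  assumes \<alpha>_nonneg: "\<And>k. k \<in> K \<Longrightarrow> 0 \<le> \<alpha> k" and \<alpha>_sum: "sum \<alpha> K \<le> 1"
    and z_pos: "\<And>k. k \<in> K \<Longrightarrow> \<alpha> k \<noteq> 0 \<Longrightarrow> 0 < z k"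
    and M: "M = (\<Sum>k\<in>K. \<alpha> k * z k) + (1 - sum \<alpha> K)" and M_pos: "0 < M"
  shows "(\<Sum>k\<in>K. if \<alpha> k = 0 then 0 else \<alpha> k * ln (z k)) \<le> ln M"
proof -
  define S where "S = sum \<alpha> K"
  have "(if \<alpha> k = 0 then 0 else \<alpha> k * ln (z k)) \<le> \<alpha> k * (z k / M - 1) + \<alpha> k * ln M"
    if k: "k \<in> K" for k
  proof (cases "\<alpha> k = 0")
    case False
    have "ln (z k) - ln M = ln (z k / M)" using z_pos[OF k False] M_pos by (simp add: ln_div)
    also have "\<dots> \<le> z k / M - 1" using z_pos[OF k False] M_pos by (intro ln_le_minus_one) auto
    finally have "\<alpha> k * ln (z k) \<le> \<alpha> k * (z k / M - 1 + ln M)"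
      using \<alpha>_nonneg[OF k] by (intro mult_left_mono) auto
    then show ?thesis using False by (simp add: algebra_simps)
  qed simp
  then have "(\<Sum>k\<in>K. if \<alpha> k = 0 then 0 else \<alpha> k * ln (z k))
      \<le> (\<Sum>k\<in>K. \<alpha> k * (z k / M - 1) + \<alpha> k * ln M)"
    by (intro sum_mono)
  also have "\<dots> = (M - (1 - S)) / M - S + S * ln M"
    by (simp add: M S_def sum.distrib algebra_simps sum_distrib_left sum_distrib_right
        sum_divide_distrib sum_subtractf)
  also have "\<dots> \<le> ln M"
  proof -
    have "- ln M \<le> 1 / M - 1"
      using ln_le_minus_one[of "1 / M"] M_pos by (simp add: ln_div)
    then have "(1 - S) * (- ln M) \<le> (1 - S) * (1 / M - 1)"
      using \<alpha>_sum S_def by (intro mult_left_mono) auto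
    then show ?thesis using M_pos by (simp add: field_simps)
  qed
  finally show ?thesis .
qed

lemma weighted_am_gm_cpow:
  fixes \<alpha> z :: "'k \<Rightarrow> real"
  assumes fin: "finite K" and \<alpha>_nonneg: "\<And>k. k \<in> K \<Longrightarrow> 0 \<le> \<alpha> k"
    and z_nonneg: "\<And>k. k \<in> K \<Longrightarrow> 0 \<le> z k" and \<alpha>_sum: "sum \<alpha> K \<le> 1"
  shows "(\<Prod>k\<in>K. cpow (z k) (\<alpha> k)) \<le> (\<Sum>k\<in>K. \<alpha> k * z k) + (1 - sum \<alpha> K)"
    (is "_ \<le> ?M")
proof (cases "\<exists>k\<in>K. \<alpha> k \<noteq> 0 \<and> z k = 0")
  case True
  then have "(\<Prod>k\<in>K. cpow (z k) (\<alpha> k)) = 0"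
    using fin prod_cpow_eq_0 by metis
  moreover have "0 \<le> (\<Sum>k\<in>K. \<alpha> k * z k)"
    using \<alpha>_nonneg z_nonneg by (intro sum_nonneg) auto
  ultimately show ?thesis using \<alpha>_sum by linarith
next
  case False
  then have z_pos: "0 < z k" if "k \<in> K" "\<alpha> k \<noteq> 0" for k
    using that z_nonneg[of k] by force
  have M_pos: "0 < ?M"
  proof (cases "sum \<alpha> K < 1")
    case True
    moreover have "0 \<le> (\<Sum>k\<in>K. \<alpha> k * z k)"
      using \<alpha>_nonneg z_nonneg by (intro sum_nonneg) auto
    ultimately show ?thesis by linarith
  next
    case False
    then obtain k where k: "k \<in> K" "\<alpha> k \<noteq> 0"
      using \<alpha>_sum by (metis sum.neutral zero_less_one)
    then have "0 < \<alpha> k * z k"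
      using z_pos \<alpha>_nonneg by (simp add: order_less_le)
    also have "\<alpha> k * z k \<le> (\<Sum>k\<in>K. \<alpha> k * z k)"
      using \<alpha>_nonneg z_nonneg k fin by (intro member_le_sum) auto
    finally show ?thesis using \<alpha>_sum by linarith
  qed
  have "(\<Prod>k\<in>K. cpow (z k) (\<alpha> k)) = (\<Prod>k\<in>K. exp (if \<alpha> k = 0 then 0 else \<alpha> k * ln (z k)))"
    using z_pos by (intro prod.cong) (force simp: cpow_def powr_def mult.commute)+
  also have "\<dots> = exp (\<Sum>k\<in>K. if \<alpha> k = 0 then 0 else \<alpha> k * ln (z k))"
    using fin by (simp add: exp_sum)
  also have "\<dots> \<le> exp (ln ?M)"
    using weighted_sum_ln_le_ln_am[OF \<alpha>_nonneg \<alpha>_sum z_pos refl M_pos] by simp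
  finally show ?thesis using M_pos by simp
qed

lemma powr_scaling_max_imp_eq:
  fixes A B \<alpha> :: real
  assumes max: "\<And>t. 0 < t \<Longrightarrow> t < 2 \<Longrightarrow> A * t powr \<alpha> - t * B \<le> A - B"
  shows "\<alpha> * A = B"
proof -
  have "((\<lambda>t. A * t powr \<alpha> - t * B) has_real_derivative A * (\<alpha> * 1 powr (\<alpha> - 1)) - 1 * B) (at 1)"
    by (auto intro!: derivative_eq_intros)
  then have "A * (\<alpha> * 1 powr (\<alpha> - 1)) - 1 * B = 0"
    using max by (intro DERIV_local_max[where d = 1]) auto
  then show ?thesis by (simp add: mult.commute)
qed

lemma cobb_douglas_reallocation_le:
  fixes \<alpha> e :: "'k::finite \<Rightarrow> real"
  assumes \<alpha>_sum: "(\<Sum>k\<in>UNIV. \<alpha> k) = 1"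
    and opt: "\<And>c. (\<And>k. 0 < c k) \<Longrightarrow> (\<Sum>k\<in>UNIV. c k * e k) = (\<Sum>k\<in>UNIV. e k) \<Longrightarrow>
                  (\<Prod>k\<in>UNIV. c k powr \<alpha> k) \<le> 1"
    and S: "S = (\<Sum>k\<in>UNIV. e k)" and D_pos: "0 < S - e j"
    and t_pos: "0 < t" and s_pos: "0 < (S - t * e j) / (S - e j)"
  shows "\<alpha> j * ln t + (1 - \<alpha> j) * ln ((S - t * e j) / (S - e j)) \<le> 0"
proof -
  define s where "s = (S - t * e j) / (S - e j)"
  have s_pos': "0 < s" using s_pos by (simp add: s_def)
  \<comment> \<open>spend \<open>t * e j\<close> on good \<open>j\<close> and rescale the other goods by \<open>s\<close> to stay on the budget line\<close>
  define c where "c m = (if m = j then t else s)" for m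
  have "(\<Sum>m\<in>UNIV. c m * e m) = (\<Sum>m\<in>UNIV. s * e m + (if m = j then (t - s) * e j else 0))"
    by (intro sum.cong) (auto simp: c_def algebra_simps)
  also have "\<dots> = s * (S - e j) + t * e j"
    by (simp add: sum.distrib S flip: sum_distrib_left) (simp add: algebra_simps)
  also have "\<dots> = S" using D_pos by (simp add: s_def)
  finally have "(\<Prod>m\<in>UNIV. c m powr \<alpha> m) \<le> 1"
    using opt[of c] t_pos s_pos' by (simp add: S c_def)
  also have "(\<Prod>m\<in>UNIV. c m powr \<alpha> m) = t powr \<alpha> j * s powr (\<Sum>m\<in>UNIV - {j}. \<alpha> m)"
    using s_pos' by (simp add: prod.remove[of UNIV j] c_def powr_sum)
  also have "(\<Sum>m\<in>UNIV - {j}. \<alpha> m) = 1 - \<alpha> j"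
    using sum.remove[of UNIV j \<alpha>] \<alpha>_sum by simp
  finally have "ln (t powr \<alpha> j * s powr (1 - \<alpha> j)) \<le> 0"
    using t_pos s_pos' by simp
  then show ?thesis
    unfolding s_def[symmetric] using t_pos s_pos' by (simp add: ln_mult ln_powr)
qed

lemma cobb_douglas_expenditure_shares:
  fixes \<alpha> e :: "'k::finite \<Rightarrow> real"
  assumes \<alpha>_sum: "(\<Sum>k\<in>UNIV. \<alpha> k) = 1" and e_pos: "\<And>k. 0 < e k"
    and opt: "\<And>c. (\<And>k. 0 < c k) \<Longrightarrow> (\<Sum>k\<in>UNIV. c k * e k) = (\<Sum>k\<in>UNIV. e k) \<Longrightarrow>
                  (\<Prod>k\<in>UNIV. c k powr \<alpha> k) \<le> 1"
  shows "e j = \<alpha> j * (\<Sum>k\<in>UNIV. e k)"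
proof (cases "UNIV = {j}")
  case True
  then show ?thesis using \<alpha>_sum unfolding True by simp
next
  case False
  then obtain k where "k \<noteq> j" by auto
  define S where "S = (\<Sum>k\<in>UNIV. e k)"
  define D where "D = S - e j"
  have "e j + e k \<le> S"
    using \<open>k \<noteq> j\<close> e_pos sum_mono2[of UNIV "{j,k}" e] by (simp add: S_def less_imp_le)
  then have D_pos: "0 < D" using e_pos[of k] unfolding D_def by linarith
  define h where "h t = \<alpha> j * ln t + (1 - \<alpha> j) * ln ((S - t * e j) / D)" for t
  have h_le: "h t \<le> h 1" if t: "\<bar>1 - t\<bar> < min 1 (D / e j)" for t
  proof -
    have "t * e j < (1 + D / e j) * e j"
      using t e_pos[of j] by (intro mult_strict_right_mono) auto
    then have "0 < (S - t * e j) / D"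
      using e_pos[of j] D_pos by (simp add: D_def field_simps)
    moreover have "0 < t" using t by auto
    ultimately show ?thesis
      using cobb_douglas_reallocation_le[OF \<alpha>_sum opt S_def, of j t] D_pos
      by (simp add: h_def D_def)
  qed
  have "(h has_real_derivative \<alpha> j * (1 / 1) + (1 - \<alpha> j) * ((- e j / D) / ((S - 1 * e j) / D))) (at 1)"
    unfolding h_def using D_pos by (auto intro!: derivative_eq_intros simp: D_def)
  then have "\<alpha> j * (1 / 1) + (1 - \<alpha> j) * ((- e j / D) / ((S - 1 * e j) / D)) = 0"
    using D_pos e_pos[of j] h_le by (intro DERIV_local_max[where d = "min 1 (D / e j)"]) auto
  then have "\<alpha> j * D = (1 - \<alpha> j) * e j" using D_pos by (simp add: D_def field_simps)
  then show ?thesis unfolding D_def S_def by (simp add: algebra_simps)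
qed

section \<open>Matrices with row sums below one\<close>

lemma invertible_diff_mat_1:
  fixes A :: "real^'n^'n"
  assumes row_sum: "\<And>i. (\<Sum>j\<in>UNIV. \<bar>A$i$j\<bar>) < 1"
  shows "invertible (A - mat 1)"
proof -
  have "z = 0" if z: "(A - mat 1) *v z = 0" for z
  proof -
    define m where "m = Max (range (\<lambda>j. \<bar>z$j\<bar>))"
    have m_ge: "\<bar>z$j\<bar> \<le> m" for j unfolding m_def by (rule Max_ge) auto
    have "m \<in> range (\<lambda>j. \<bar>z$j\<bar>)" unfolding m_def by (rule Max_in) auto
    then obtain i where i: "\<bar>z$i\<bar> = m" by auto
    have "z$i = (A *v z)$i" using z by (simp add: matrix_vector_mult_diff_rdistrib)
    then have "m = \<bar>\<Sum>j\<in>UNIV. A$i$j * z$j\<bar>" using i by (simp add: matrix_vector_mult_def)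
    also have "\<dots> \<le> (\<Sum>j\<in>UNIV. \<bar>A$i$j\<bar> * m)"
      using m_ge by (intro order.trans[OF sum_abs] sum_mono) (auto simp: abs_mult intro: mult_left_mono)
    also have "\<dots> = (\<Sum>j\<in>UNIV. \<bar>A$i$j\<bar>) * m" by (simp add: sum_distrib_right)
    finally have "m \<le> (\<Sum>j\<in>UNIV. \<bar>A$i$j\<bar>) * m" .
    moreover have "0 \<le> m" using i by auto
    ultimately have "m = 0"
    proof (cases "m = 0")
      case False
      then have "(\<Sum>j\<in>UNIV. \<bar>A$i$j\<bar>) * m < m"
        using \<open>0 \<le> m\<close> row_sum[of i] mult_strict_right_mono[of _ 1 m] by simp
      with \<open>m \<le> (\<Sum>j\<in>UNIV. \<bar>A$i$j\<bar>) * m\<close> show ?thesis by simp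
    qed
    then show ?thesis using m_ge by (simp add: vec_eq_iff)
  qed
  then have "inj ((*v) (A - mat 1))"
    by (simp add: linear_injective_0[OF matrix_vector_mul_linear])
  then show ?thesis
    using invertible_left_inverse matrix_left_invertible_injective by blast
qed

lemma invertible_mult_vec_eq_iff:
  fixes M :: "real^'n^'n"
  assumes "invertible M"
  shows "M *v z = r \<longleftrightarrow> z = matrix_inv M *v r"
proof -
  have "M ** matrix_inv M = mat 1 \<and> matrix_inv M ** M = mat 1"
    using assms unfolding invertible_def matrix_inv_def by (rule someI_ex)
  then show ?thesis by (metis matrix_vector_mul_assoc matrix_vector_mul_lid)
qed

definition revenue :: "('n option \<Rightarrow> real) \<Rightarrow> ('n option \<Rightarrow> real) \<Rightarrow> 'n \<Rightarrow> real" where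
  "revenue p y i = p (Some i) * y (Some i)"

lemma dotp_update: "dotp p (z(k := t)) = dotp p z + p k * (t - z k)"
proof -
  have "dotp p (z(k := t)) = (\<Sum>m\<in>UNIV. p m * z m + (if m = k then p k * (t - z k) else 0))"
    unfolding dotp_def by (intro sum.cong) (auto simp: algebra_simps)
  then show ?thesis by (simp add: sum.distrib dotp_def)
qed

lemma dotp_scale: "dotp (\<lambda>g. c * p g) z = c * dotp p z"
  unfolding dotp_def by (simp add: sum_distrib_left algebra_simps)

lemma profit_scale: "profit (\<lambda>g. c * p g) i yi xi = c * profit p i yi xi"
  unfolding profit_def dotp_scale by (simp add: algebra_simps)

lemma income_scale: "income (\<lambda>g. c * p g) x y = c * income p x y"
  unfolding income_def profit_scale by (simp add: sum_distrib_left algebra_simps)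

lemma prodfun_update_scale:
  assumes "0 < t"
  shows "prodfun lam a i (z(k := t * z k)) = t powr a i k * prodfun lam a i z"
proof -
  define c where "c m = (if m = k then t else 1)" for m
  have "z(k := t * z k) = (\<lambda>m. c m * z m)" by (auto simp: c_def)
  moreover have "(\<Prod>m\<in>UNIV. cpow (c m) (a i m)) = (\<Prod>m\<in>UNIV. if m = k then t powr a i k else 1)"
    using assms by (intro prod.cong) (auto simp: c_def cpow_1_left cpow_eq_powr)
  ultimately show ?thesis
    by (simp add: prodfun_def prod_cpow_mult)
qed

lemma utility_rescale:
  "utility a0 (\<lambda>k. case k of None \<Rightarrow> r | Some m \<Rightarrow> c m * z (Some m))
     = (\<Prod>m\<in>UNIV. cpow (c m) (a0 m)) * utility a0 z"
  by (simp add: utility_def prod_cpow_mult)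

section \<open>The revenue equation and optimal demands\<close>

locale share_system =
  fixes a0 :: "'n::finite \<Rightarrow> real" and a :: "'n \<Rightarrow> 'n option \<Rightarrow> real"
  assumes a0_pos: "\<And>j. 0 < a0 j" and a0_sum: "(\<Sum>j\<in>UNIV. a0 j) = 1"
    and a_nonneg: "\<And>i k. 0 \<le> a i k" and labor_share_pos: "\<And>i. 0 < a i None"
    and a_sum_le_1: "\<And>i. (\<Sum>k\<in>UNIV. a i k) \<le> 1"
begin

text \<open>The goods block of the paper's matrix \<open>\<tilde>A\<close>: intermediate demand of the firms plus household
  spending of the profits \<open>eps a i * w i\<close>, generated by the revenues \<open>w\<close>.\<close>
definition demand_map :: "('n \<Rightarrow> real) \<Rightarrow> 'n \<Rightarrow> real" where
  "demand_map w j = a0 j * (\<Sum>i\<in>UNIV. eps a i * w i) + (\<Sum>i\<in>UNIV. a i (Some j) * w i)"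

lemma eps_nonneg: "0 \<le> eps a i"
  using a_sum_le_1[of i] by (simp add: eps_def)

lemma sum_goods_shares: "(\<Sum>j\<in>UNIV. a i (Some j)) = 1 - a i None - eps a i"
  using sum_UNIV_option[of "a i"] by (simp add: eps_def)

lemma sum_demand_map: "(\<Sum>j\<in>UNIV. demand_map w j) = (\<Sum>i\<in>UNIV. (1 - a i None) * w i)"
proof -
  have "(\<Sum>j\<in>UNIV. demand_map w j)
      = (\<Sum>j\<in>UNIV. a0 j) * (\<Sum>i\<in>UNIV. eps a i * w i) + (\<Sum>j\<in>UNIV. \<Sum>i\<in>UNIV. a i (Some j) * w i)"
    by (simp add: demand_map_def sum.distrib sum_distrib_right)
  also have "(\<Sum>j\<in>UNIV. \<Sum>i\<in>UNIV. a i (Some j) * w i) = (\<Sum>i\<in>UNIV. \<Sum>j\<in>UNIV. a i (Some j) * w i)"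
    by (rule sum.swap)
  also have "\<dots> = (\<Sum>i\<in>UNIV. (1 - a i None - eps a i) * w i)"
    by (simp only: sum_goods_shares flip: sum_distrib_right)
  finally show ?thesis
    by (simp add: a0_sum algebra_simps sum.distrib sum_subtractf)
qed

lemma demand_map_mono: "(\<And>i. v i \<le> w i) \<Longrightarrow> demand_map v j \<le> demand_map w j"
  unfolding demand_map_def
  by (intro add_mono mult_left_mono sum_mono)
    (auto intro: less_imp_le[OF a0_pos] eps_nonneg a_nonneg mult_left_mono)

lemma demand_map_diff: "demand_map (\<lambda>i. v i - w i) j = demand_map v j - demand_map w j"
  unfolding demand_map_def by (simp add: algebra_simps sum_subtractf)

lemma demand_map_0: "demand_map (\<lambda>_. 0) j = 0"
  by (simp add: demand_map_def)

text \<open>Each firm leaks a positive share of its revenue to labor, which is why the truncation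
  \<open>min w 0\<close> of a solution must vanish.\<close>
lemma revenue_eq_solution_nonneg:
  assumes eq: "\<And>j. w j = c j + demand_map w j" and c_nonneg: "\<And>j. 0 \<le> c j"
  shows "0 \<le> w j"
proof -
  define n where "n i = min (w i) 0" for i
  have n_le: "n i \<le> w i" "n i \<le> 0" for i by (auto simp: n_def)
  have "demand_map n j \<le> n j" for j
  proof -
    have "demand_map n j \<le> demand_map w j" using n_le by (intro demand_map_mono)
    also have "\<dots> \<le> w j" using eq[of j] c_nonneg[of j] by linarith
    moreover have "demand_map n j \<le> 0"
      using demand_map_mono[of n "\<lambda>_. 0" j] n_le by (simp add: demand_map_0)
    ultimately show ?thesis by (simp add: n_def)
  qed
  then have "(\<Sum>i\<in>UNIV. (1 - a i None) * n i) \<le> (\<Sum>i\<in>UNIV. n i)"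
    using sum_mono[of UNIV "demand_map n" n] by (simp add: sum_demand_map)
  then have "0 \<le> (\<Sum>i\<in>UNIV. a i None * n i)"
    by (simp add: algebra_simps sum_subtractf)
  moreover have terms_nonpos: "a i None * n i \<le> 0" for i
    using labor_share_pos[of i] n_le(2)[of i] by (simp add: mult_nonneg_nonpos)
  ultimately have "(\<Sum>i\<in>UNIV. a i None * n i) = 0"
    by (meson antisym sum_nonpos)
  then have "(\<Sum>i\<in>UNIV. - (a i None * n i)) = 0"
    by (simp add: sum_negf)
  then have "a j None * n j = 0"
    using terms_nonpos sum_nonneg_eq_0_iff[of UNIV "\<lambda>i. - (a i None * n i)"] by auto
  then show ?thesis using labor_share_pos[of j] by (simp add: n_def)
qed

lemma demand_map_fixpoint_eq_0:
  assumes fixpoint: "\<And>j. w j = demand_map w j"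
  shows "w = (\<lambda>_. 0)"
proof
  fix j
  have "w j = 0 + demand_map w j" for j using fixpoint[of j] by simp
  then have "0 \<le> w j" by (rule revenue_eq_solution_nonneg) simp
  moreover have "- w j = 0 + demand_map (\<lambda>i. - w i) j" for j
    using fixpoint[of j] demand_map_diff[of "\<lambda>_. 0" w j] by (simp add: demand_map_0)
  then have "0 \<le> - w j" by (rule revenue_eq_solution_nonneg) simp
  ultimately show "w j = 0" by simp
qed

lemma revenue_eq_unique:
  assumes "\<And>j. v j = c j + demand_map v j" "\<And>j. w j = c j + demand_map w j"
  shows "v = w"
proof -
  have "(\<lambda>i. v i - w i) = (\<lambda>_. 0)"
  proof (rule demand_map_fixpoint_eq_0)
    show "v j - w j = demand_map (\<lambda>i. v i - w i) j" for j
      using assms(1)[of j] assms(2)[of j] unfolding demand_map_diff by linarith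
  qed
  then show ?thesis by (auto simp: fun_eq_iff)
qed

lemma revenue_eq_solvable: "\<exists>w. \<forall>j. w j = c j + demand_map w j"
proof -
  define L :: "real^'n \<Rightarrow> real^'n" where "L v = (\<chi> j. v$j - demand_map (\<lambda>i. v$i) j)" for v
  have lin: "linear L"
    by (rule linearI)
      (auto simp: L_def demand_map_def vec_eq_iff algebra_simps sum.distrib sum_distrib_left)
  have "inj L"
  proof (subst linear_injective_0[OF lin], intro allI impI)
    fix v assume "L v = 0"
    then have "\<forall>j. v$j - demand_map (\<lambda>i. v$i) j = 0"
      by (simp only: L_def vec_eq_iff vec_lambda_beta zero_index) simp
    then have "v$j = demand_map (\<lambda>i. v$i) j" for j
      by (metis eq_iff_diff_eq_0)
    then have "(\<lambda>i. v$i) = (\<lambda>_. 0)" by (rule demand_map_fixpoint_eq_0)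
    then show "v = 0" by (simp add: vec_eq_iff fun_eq_iff)
  qed
  then obtain v where "L v = (\<chi> j. c j)"
    using linear_injective_imp_surjective[OF lin] by (metis surjD)
  then have v: "\<forall>j. v$j - demand_map (\<lambda>i. v$i) j = c j"
    by (simp only: L_def vec_eq_iff vec_lambda_beta) simp
  have "v$j = c j + demand_map (\<lambda>i. v$i) j" for j
    using v[rule_format, of j] by linarith
  then show ?thesis by (intro exI[of _ "\<lambda>i. v$i"]) blast
qed

lemma revenue_eq_solution_pos:
  assumes "\<And>j. w j = c j + demand_map w j" and "\<And>j. 0 < c j"
  shows "0 < w j"
proof -
  have "0 \<le> w i" for i
    using revenue_eq_solution_nonneg[of w c] assms less_imp_le by blast
  then have "0 \<le> demand_map w j"
    using demand_map_mono[of "\<lambda>_. 0" w j] by (simp add: demand_map_0)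
  then show ?thesis using assms[of j] by linarith
qed

lemma revenue_eq_labor_demand:
  assumes "\<And>j. w j = a0 j + demand_map w j"
  shows "(\<Sum>i\<in>UNIV. a i None * w i) = 1"
proof -
  have "(\<Sum>j\<in>UNIV. w j) = (\<Sum>j\<in>UNIV. a0 j) + (\<Sum>j\<in>UNIV. demand_map w j)"
    by (subst assms) (simp add: sum.distrib)
  then have "(\<Sum>j\<in>UNIV. w j) = 1 + (\<Sum>i\<in>UNIV. (1 - a i None) * w i)"
    by (simp add: a0_sum sum_demand_map)
  then show ?thesis by (simp add: algebra_simps sum_subtractf)
qed

lemma invertible_shareA_minus_1: "invertible (shareA a - mat 1)"
proof (rule invertible_diff_mat_1)
  fix i
  have "(\<Sum>j\<in>UNIV. \<bar>shareA a $ i $ j\<bar>) = 1 - a i None - eps a i"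
    by (simp add: shareA_def a_nonneg sum_goods_shares)
  then show "(\<Sum>j\<in>UNIV. \<bar>shareA a $ i $ j\<bar>) < 1"
    using labor_share_pos[of i] eps_nonneg[of i] by linarith
qed

lemma shareA_minus_1_mult_vec:
  "((shareA a - mat 1) *v z) $ i = (\<Sum>j\<in>UNIV. a i (Some j) * z$j) - z$i"
proof -
  have "((shareA a - mat 1) *v z) $ i = (\<Sum>j\<in>UNIV. a i (Some j) * z$j - (if i = j then z$j else 0))"
    by (simp add: matrix_vector_mult_def shareA_def mat_def left_diff_distrib)
      (intro sum.cong, auto)
  then show ?thesis by (simp add: sum_subtractf)
qed

definition Dmat :: "real^'n^'n" where
  "Dmat = (\<chi> i k. if i = k then (\<Sum>j\<in>UNIV. a i j) - 1 else 0)"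

lemma Dmat_mult_vec: "(Dmat *v z) $ i = ((\<Sum>j\<in>UNIV. a i j) - 1) * z$i"
proof -
  have "(Dmat *v z) $ i = (\<Sum>k\<in>UNIV. if i = k then ((\<Sum>j\<in>UNIV. a i j) - 1) * z$k else 0)"
    unfolding Dmat_def matrix_vector_mult_def vec_lambda_beta by (intro sum.cong) auto
  then show ?thesis by simp
qed

lemma utility_strict_mono:
  assumes "\<And>k. 0 \<le> x (Some k)" and "\<And>k. x (Some k) \<le> z (Some k)"
    and "\<And>k. 0 < z (Some k)" and "x (Some j) < z (Some j)"
  shows "utility a0 x < utility a0 z"
  unfolding utility_def
proof (rule prod_mono_strict[of j])
  show "cpow (x (Some j)) (a0 j) < cpow (z (Some j)) (a0 j)"
    using assms a0_pos[of j] by (simp add: cpow_def powr_less_mono2)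
  show "0 \<le> cpow (x (Some k)) (a0 k) \<and> cpow (x (Some k)) (a0 k) \<le> cpow (z (Some k)) (a0 k)" for k
    using assms a0_pos[of k] by (auto simp: cpow_def powr_mono2)
  show "0 < cpow (z (Some k)) (a0 k)" for k
    using assms by (simp add: cpow_pos)
qed auto

text \<open>Weighted AM-GM applied to the ratios of an arbitrary affordable bundle to this one.\<close>
lemma expenditure_share_bundle_optimal:
  assumes p_pos: "\<And>k. 0 < p k" and I_pos: "0 < I" and z: "nonneg z" "dotp p z \<le> I"
  shows "utility a0 z \<le> utility a0 (\<lambda>k. case k of None \<Rightarrow> 0 | Some j \<Rightarrow> a0 j * I / p (Some j))"
    (is "_ \<le> utility a0 ?x")
proof -
  define r where "r k = p (Some k) * z (Some k) / (a0 k * I)" for k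
  have r_nonneg: "0 \<le> r k" for k
    using p_pos[of "Some k"] z a0_pos[of k] I_pos by (simp add: r_def nonneg_def)
  have "utility a0 z = utility a0 (\<lambda>k. case k of None \<Rightarrow> 0 | Some m \<Rightarrow> r m * ?x (Some m))"
    using p_pos a0_pos I_pos by (simp add: utility_def r_def less_imp_neq[symmetric])
  also have "\<dots> = (\<Prod>k\<in>UNIV. cpow (r k) (a0 k)) * utility a0 ?x"
    by (rule utility_rescale)
  finally have rescale: "utility a0 z = (\<Prod>k\<in>UNIV. cpow (r k) (a0 k)) * utility a0 ?x" .
  have "(\<Prod>k\<in>UNIV. cpow (r k) (a0 k)) \<le> 1"
  proof -
    have "(\<Prod>k\<in>UNIV. cpow (r k) (a0 k)) \<le> (\<Sum>k\<in>UNIV. a0 k * r k) + (1 - (\<Sum>k\<in>UNIV. a0 k))"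
      by (rule weighted_am_gm_cpow) (auto simp: r_nonneg a0_sum less_imp_le[OF a0_pos])
    also have "\<dots> = (\<Sum>k\<in>UNIV. p (Some k) * z (Some k)) / I"
      using a0_pos by (simp add: r_def a0_sum sum_divide_distrib less_imp_neq[symmetric])
    also have "\<dots> \<le> 1"
    proof -
      have "p None * z None + (\<Sum>k\<in>UNIV. p (Some k) * z (Some k)) \<le> I"
        using z by (simp add: dotp_def sum_UNIV_option)
      moreover have "0 \<le> p None * z None"
        using z p_pos[of None] by (simp add: nonneg_def)
      ultimately show ?thesis using I_pos by simp
    qed
    finally show ?thesis .
  qed
  moreover have "0 \<le> utility a0 ?x"
    using p_pos I_pos a0_pos
    by (auto simp: utility_def less_imp_le intro!: prod_nonneg cpow_nonneg divide_nonneg_pos)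
  moreover have "0 \<le> (\<Prod>k\<in>UNIV. cpow (r k) (a0 k))"
    by (simp add: prod_nonneg cpow_nonneg r_nonneg)
  ultimately show ?thesis by (simp add: rescale mult_left_le_one_le)
qed

lemma dotp_cost_share_inputs:
  assumes "\<And>k. p k \<noteq> 0"
  shows "dotp p (\<lambda>k. a i k * w / p k) = (\<Sum>k\<in>UNIV. a i k) * w"
  using assms by (simp add: dotp_def sum_distrib_right)

lemma cost_share_inputs_optimal:
  assumes p_pos: "\<And>k. 0 < p k" and w_pos: "0 < w"
    and revenue: "p (Some i) * prodfun lam a i (\<lambda>k. a i k * w / p k) = w"
    and xi: "nonneg xi"
  shows "profit p i (prodfun lam a i xi) xi \<le> eps a i * w"
proof -
  define r where "r k = p k * xi k / (a i k * w)" for k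
  have r_nonneg: "0 \<le> r k" for k
    using p_pos[of k] xi a_nonneg[of i k] w_pos by (simp add: r_def nonneg_def)
  have "cpow (xi k) (a i k) = cpow (r k) (a i k) * cpow (a i k * w / p k) (a i k)" for k
  proof (cases "a i k = 0")
    case False
    then have "xi k = r k * (a i k * w / p k)"
      using p_pos[of k] w_pos by (simp add: r_def field_simps)
    then show ?thesis by (simp only: cpow_mult)
  qed (simp add: cpow_def)
  then have "p (Some i) * prodfun lam a i xi = (\<Prod>k\<in>UNIV. cpow (r k) (a i k)) * w"
    using revenue by (simp add: prodfun_def prod.distrib algebra_simps)
  also have "\<dots> \<le> ((\<Sum>k\<in>UNIV. a i k * r k) + (1 - (\<Sum>k\<in>UNIV. a i k))) * w"
    using w_pos
    by (intro mult_right_mono weighted_am_gm_cpow) (auto simp: r_nonneg a_nonneg a_sum_le_1)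
  also have "w * (\<Sum>k\<in>UNIV. a i k * r k) \<le> dotp p xi"
    unfolding dotp_def sum_distrib_left
  proof (rule sum_mono)
    show "w * (a i k * r k) \<le> p k * xi k" for k
      using p_pos[of k] xi w_pos by (cases "a i k = 0") (auto simp: r_def nonneg_def)
  qed
  ultimately show ?thesis
    by (simp add: profit_def eps_def algebra_simps)
qed

end

section \<open>Equilibria\<close>

locale economy = share_system a0 a
  for a0 :: "'n::finite \<Rightarrow> real" and a :: "'n \<Rightarrow> 'n option \<Rightarrow> real" +
  fixes lam :: "'n \<Rightarrow> real"
  assumes lam_pos: "\<And>i. 0 < lam i"
begin

abbreviation GE where "GE \<equiv> general_equilibrium a0 lam a"

lemma GE_D:
  assumes "GE p x y"
  shows GE_price_nonneg: "0 \<le> p g" and GE_labor_supply: "y None = 1"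
    and GE_inputs_nonneg: "0 \<le> x (Some i) k"
    and GE_output: "y (Some i) = prodfun lam a i (x (Some i))"
    and GE_firm_optimal: "nonneg xi \<Longrightarrow> profit p i (prodfun lam a i xi) xi \<le> profit p i (y (Some i)) (x (Some i))"
    and GE_consumption_nonneg: "0 \<le> x None k"
    and GE_budget: "dotp p (x None) \<le> income p x y"
    and GE_household_optimal:
      "nonneg z \<Longrightarrow> dotp p z \<le> income p x y \<Longrightarrow> utility a0 z \<le> utility a0 (x None)"
    and GE_market_clearing: "(\<Sum>j\<in>UNIV. x j g) = y g"
  using assms unfolding general_equilibrium_def nonneg_def by blast+

lemma GE_profit_nonneg:
  assumes "GE p x y"
  shows "0 \<le> profit p i (y (Some i)) (x (Some i))"
proof -
  have "prodfun lam a i (\<lambda>_. 0) = 0"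
    using labor_share_pos[of i] by (simp add: prodfun_def prod_cpow_eq_0[of UNIV None])
  then show ?thesis
    using GE_firm_optimal[OF assms, of "\<lambda>_. 0" i] by (simp add: profit_def dotp_def nonneg_def)
qed

lemma profit_unbounded_if_labor_free:
  assumes p0: "p None = 0" and pj: "0 < p (Some j)"
  shows "\<exists>xi. nonneg xi \<and> B < profit p j (prodfun lam a j xi) xi"
proof -
  define C where "C = (\<Sum>k\<in>UNIV. p (Some k))"
  define \<beta> where "\<beta> = (\<bar>B\<bar> + \<bar>C\<bar> + 1) / (p (Some j) * lam j)"
  have \<beta>_pos: "0 < \<beta>" using pj lam_pos[of j] by (simp add: \<beta>_def)
  define xi where "xi k = (if k = None then \<beta> powr (1 / a j None) else 1)" for k :: "'n option"
  have "prodfun lam a j xi = lam j * \<beta>"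
    using \<beta>_pos labor_share_pos[of j]
    by (simp add: prodfun_def prod_UNIV_option xi_def cpow_1_left cpow_eq_powr powr_powr)
  moreover have "dotp p xi = C"
    by (simp add: dotp_def sum_UNIV_option xi_def C_def p0)
  ultimately have "profit p j (prodfun lam a j xi) xi = \<bar>B\<bar> + \<bar>C\<bar> + 1 - C"
    using pj lam_pos[of j] by (simp add: profit_def \<beta>_def)
  moreover have "nonneg xi" using \<beta>_pos by (simp add: nonneg_def xi_def)
  ultimately show ?thesis by force
qed

lemma GE_labor_price_pos:
  assumes GE: "GE p x y"
  shows "0 < p None"
proof (rule ccontr)
  assume "\<not> 0 < p None"
  then have p0: "p None = 0" using GE_price_nonneg[OF GE, of None] by simp
  have "p (Some j) = 0" for j
  proof (rule ccontr)
    assume "p (Some j) \<noteq> 0"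
    then have "0 < p (Some j)" using GE_price_nonneg[OF GE, of "Some j"] by simp
    then obtain xi where xi: "nonneg xi"
      and "profit p j (y (Some j)) (x (Some j)) < profit p j (prodfun lam a j xi) xi"
      using profit_unbounded_if_labor_free[of p j] p0 by blast
    then show False using GE_firm_optimal[OF GE xi, of j] by linarith
  qed
  with p0 have p_0: "p = (\<lambda>_. 0)" by (metis not_None_eq ext)
  \<comment> \<open>then everything is free, and one more unit of each good is affordable\<close>
  define z where "z k = x None k + 1" for k
  have "utility a0 z \<le> utility a0 (x None)"
    using GE_household_optimal[OF GE, of z] GE_consumption_nonneg[OF GE]
    by (simp add: p_0 z_def nonneg_def dotp_def income_def profit_def add_nonneg_pos)
  moreover have "utility a0 (x None) < utility a0 z"
    using GE_consumption_nonneg[OF GE] by (intro utility_strict_mono[of _ _ undefined]) (auto simp: z_def add_nonneg_pos)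
  ultimately show False by simp
qed

lemma GE_income_pos:
  assumes GE: "GE p x y"
  shows "0 < income p x y"
  using GE_labor_price_pos[OF GE] GE_profit_nonneg[OF GE]
  by (simp add: income_def add_pos_nonneg sum_nonneg)

lemma GE_utility_pos:
  assumes GE: "GE p x y"
  shows "0 < utility a0 (x None)"
proof -
  define P where "P = (\<Sum>k\<in>UNIV. p (Some k))"
  have P_nonneg: "0 \<le> P" using GE_price_nonneg[OF GE] by (simp add: P_def sum_nonneg)
  define c where "c = income p x y / (1 + P)"
  have c_pos: "0 < c" using GE_income_pos[OF GE] P_nonneg by (simp add: c_def)
  define z where "z k = (case k of None \<Rightarrow> 0 | Some _ \<Rightarrow> c)" for k :: "'n option"
  have "dotp p z = c * P"
    by (simp add: dotp_def sum_UNIV_option z_def P_def sum_distrib_left mult.commute)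
  also have "\<dots> \<le> income p x y"
    using c_pos P_nonneg by (simp add: c_def field_simps)
  finally have "utility a0 z \<le> utility a0 (x None)"
    using GE_household_optimal[OF GE, of z] c_pos
    by (auto simp: nonneg_def z_def split: option.split)
  moreover have "0 < utility a0 z"
    using c_pos by (simp add: utility_def z_def prod_pos cpow_pos)
  ultimately show ?thesis by simp
qed

lemma GE_consumption_pos:
  assumes GE: "GE p x y"
  shows "0 < x None (Some k)"
proof (rule ccontr)
  assume "\<not> 0 < x None (Some k)"
  then have "x None (Some k) = 0" using GE_consumption_nonneg[OF GE, of "Some k"] by simp
  then have "utility a0 (x None) = 0"
    using a0_pos[of k] by (simp add: utility_def prod_cpow_eq_0[of UNIV k])
  then show False using GE_utility_pos[OF GE] by simp
qed

lemma GE_goods_price_pos: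
  assumes GE: "GE p x y"
  shows "0 < p (Some j)"
proof (rule ccontr)
  assume "\<not> 0 < p (Some j)"
  then have pj: "p (Some j) = 0" using GE_price_nonneg[OF GE, of "Some j"] by simp
  define z where "z = (x None)(Some j := x None (Some j) + 1)"
  have "dotp p z = dotp p (x None)"
    by (simp add: z_def dotp_update pj)
  then have "utility a0 z \<le> utility a0 (x None)"
    using GE_household_optimal[OF GE, of z] GE_budget[OF GE] GE_consumption_nonneg[OF GE]
    by (simp add: z_def nonneg_def add_nonneg_pos)
  moreover have "utility a0 (x None) < utility a0 z"
    using GE_consumption_pos[OF GE, of j] GE_consumption_pos[OF GE]
    by (intro utility_strict_mono[of _ _ j]) (auto simp: z_def less_imp_le add_pos_pos)
  ultimately show False by simp
qed

lemma GE_price_pos: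
  assumes "GE p x y"
  shows "0 < p g"
  using GE_labor_price_pos[OF assms] GE_goods_price_pos[OF assms] by (cases g) auto

lemma GE_consumption_rescaling:
  assumes GE: "GE p x y" and c_pos: "\<And>k. 0 < c k"
    and budget: "(\<Sum>k\<in>UNIV. c k * (p (Some k) * x None (Some k))) \<le> income p x y"
  shows "(\<Prod>k\<in>UNIV. c k powr a0 k) \<le> 1"
proof -
  define z where "z k = (case k of None \<Rightarrow> 0 | Some m \<Rightarrow> c m * x None (Some m))" for k
  have "utility a0 z \<le> utility a0 (x None)"
  proof (rule GE_household_optimal[OF GE])
    show "nonneg z"
      using c_pos GE_consumption_nonneg[OF GE]
      by (auto simp: z_def nonneg_def less_imp_le split: option.split)
    show "dotp p z \<le> income p x y"
      using budget by (simp add: z_def dotp_def sum_UNIV_option algebra_simps)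
  qed
  moreover have "utility a0 z = (\<Prod>k\<in>UNIV. c k powr a0 k) * utility a0 (x None)"
    unfolding z_def utility_rescale using c_pos by (simp add: cpow_eq_powr)
  ultimately show ?thesis
    using GE_utility_pos[OF GE] by (simp add: mult_le_cancel_right2)
qed

lemma GE_household_demand:
  assumes GE: "GE p x y"
  shows GE_no_leisure: "x None None = 0"
    and GE_expenditure_share: "p (Some j) * x None (Some j) = a0 j * income p x y"
proof -
  define e where "e k = p (Some k) * x None (Some k)" for k
  define I where "I = income p x y"
  have e_pos: "0 < e k" for k
    using GE_goods_price_pos[OF GE] GE_consumption_pos[OF GE] by (simp add: e_def)
  define S where "S = (\<Sum>k\<in>UNIV. e k)"
  have S_pos: "0 < S" using e_pos by (simp add: S_def sum_pos)
  have rescaling: "(\<Prod>k\<in>UNIV. c k powr a0 k) \<le> 1"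
    if "\<And>k. 0 < c k" "(\<Sum>k\<in>UNIV. c k * e k) \<le> I" for c
    using GE_consumption_rescaling[OF GE that(1)] that(2) by (simp add: e_def I_def)
  have I_pos: "0 < I" using GE_income_pos[OF GE] by (simp add: I_def)
  \<comment> \<open>scaling all consumption by \<open>I / S\<close> shows that the budget constraint binds\<close>
  have "(\<Sum>k\<in>UNIV. I / S * e k) = I"
    unfolding sum_distrib_left[symmetric] S_def[symmetric] using S_pos by simp
  then have "(\<Prod>k\<in>UNIV. (I / S) powr a0 k) \<le> 1"
    using S_pos I_pos by (intro rescaling) simp_all
  moreover have "(\<Prod>k\<in>UNIV. (I / S) powr a0 k) = I / S"
    using S_pos I_pos by (simp add: powr_sum[of "I / S" a0 UNIV, symmetric] a0_sum)
  ultimately have "I \<le> S"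
    using S_pos by simp
  moreover have "p None * x None None + S \<le> I"
    using GE_budget[OF GE] by (simp add: dotp_def sum_UNIV_option e_def I_def S_def)
  moreover have "0 \<le> p None * x None None"
    using GE_price_nonneg[OF GE] GE_consumption_nonneg[OF GE] by simp
  ultimately have S_eq: "S = I" and "p None * x None None = 0"
    by linarith+
  then show "x None None = 0"
    using GE_labor_price_pos[OF GE] by simp
  have "e j = a0 j * S"
    unfolding S_def using a0_sum e_pos
    by (rule cobb_douglas_expenditure_shares) (simp add: rescaling S_eq[unfolded S_def])
  then show "p (Some j) * x None (Some j) = a0 j * income p x y"
    by (simp add: S_eq e_def I_def)
qed

lemma GE_input_expenditure:
  assumes GE: "GE p x y"
  shows "p k * x (Some i) k = a i k * revenue p y i"
proof -
  have scaled: "revenue p y i * t powr a i k - t * (p k * x (Some i) k) \<le> revenue p y i - p k * x (Some i) k"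
    if t: "0 < t" for t
  proof -
    define z where "z = (x (Some i))(k := t * x (Some i) k)"
    have "nonneg z"
      using GE_inputs_nonneg[OF GE] t by (simp add: z_def nonneg_def)
    from GE_firm_optimal[OF GE this, where i = i] show ?thesis
      using GE_output[OF GE, of i] t
      by (simp add: z_def profit_def prodfun_update_scale dotp_update revenue_def algebra_simps)
  qed
  have "a i k * revenue p y i = p k * x (Some i) k"
    by (rule powr_scaling_max_imp_eq[where A = "revenue p y i" and B = "p k * x (Some i) k"])
      (rule scaled)
  then show ?thesis ..
qed

lemma GE_input_demand:
  assumes GE: "GE p x y"
  shows "x (Some i) k = a i k * revenue p y i / p k"
  using GE_input_expenditure[OF GE, of k i] GE_price_pos[OF GE, of k] by (simp add: field_simps)

lemma GE_consumption_demand: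
  assumes GE: "GE p x y"
  shows "x None (Some k) = a0 k * income p x y / p (Some k)"
  using GE_expenditure_share[OF GE, of k] GE_price_pos[OF GE, of "Some k"] by (simp add: field_simps)

lemma GE_profit:
  assumes GE: "GE p x y"
  shows "profit p i (y (Some i)) (x (Some i)) = eps a i * revenue p y i"
proof -
  have "dotp p (x (Some i)) = (\<Sum>k\<in>UNIV. a i k) * revenue p y i"
    using GE_input_expenditure[OF GE] by (simp add: dotp_def sum_distrib_right)
  then show ?thesis by (simp add: profit_def eps_def revenue_def algebra_simps)
qed

lemma GE_income:
  assumes GE: "GE p x y"
  shows "income p x y = p None + (\<Sum>i\<in>UNIV. eps a i * revenue p y i)"
  by (simp add: income_def GE_profit[OF GE])

lemma GE_revenue_eq:
  assumes GE: "GE p x y"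
  shows "revenue p y j = p None * a0 j + demand_map (revenue p y) j"
proof -
  have "revenue p y j = p (Some j) * x None (Some j) + (\<Sum>i\<in>UNIV. p (Some j) * x (Some i) (Some j))"
    by (simp add: revenue_def GE_market_clearing[OF GE, symmetric] sum_UNIV_option distrib_left
        sum_distrib_left)
  also have "\<dots> = a0 j * income p x y + (\<Sum>i\<in>UNIV. a i (Some j) * revenue p y i)"
    by (simp add: GE_expenditure_share[OF GE] GE_input_expenditure[OF GE])
  finally show ?thesis
    by (simp add: GE_income[OF GE] demand_map_def algebra_simps)
qed

definition uvec :: "real^'n" where
  "uvec = (\<chi> i. ln (lam i) + (\<Sum>j\<in>UNIV. xlogx (a i j)))"

lemma ln_prodfun_cost_share:
  assumes w_pos: "0 < w" and q_pos: "\<And>k. 0 < q k"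
  shows "0 < prodfun lam a i (\<lambda>k. a i k * w / q k)"
    and "ln (prodfun lam a i (\<lambda>k. a i k * w / q k))
           = ln (lam i) + (\<Sum>k\<in>UNIV. xlogx (a i k)) + (\<Sum>k\<in>UNIV. a i k) * ln w
             - (\<Sum>k\<in>UNIV. a i k * ln (q k))"
proof -
  have factor_pos: "0 < cpow (a i k * w / q k) (a i k)" for k
    using a_nonneg[of i k] w_pos q_pos[of k] by (cases "a i k = 0") (simp_all add: cpow_def)
  have ln_factor: "ln (cpow (a i k * w / q k) (a i k)) = xlogx (a i k) + a i k * ln w - a i k * ln (q k)" for k
  proof (cases "a i k = 0")
    case False
    then have "0 < a i k" using a_nonneg[of i k] by simp
    then show ?thesis
      using False w_pos q_pos[of k] by (simp add: cpow_def xlogx_def ln_div ln_mult algebra_simps)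
  qed (simp add: cpow_def xlogx_def)
  show "0 < prodfun lam a i (\<lambda>k. a i k * w / q k)"
    unfolding prodfun_def using lam_pos[of i] factor_pos by (simp add: prod_pos)
  then show "ln (prodfun lam a i (\<lambda>k. a i k * w / q k))
           = ln (lam i) + (\<Sum>k\<in>UNIV. xlogx (a i k)) + (\<Sum>k\<in>UNIV. a i k) * ln w
             - (\<Sum>k\<in>UNIV. a i k * ln (q k))"
    using lam_pos[of i] factor_pos
    by (simp add: prodfun_def ln_mult prod_pos ln_prod less_imp_neq[symmetric] ln_factor
        sum.distrib sum_subtractf sum_distrib_right)
qed

text \<open>The normalisation \<open>p None = 1\<close> removes the labor input from the logarithmic production
  equations.\<close>
lemma production_iff_log_prices:
  assumes p_pos: "\<And>g. 0 < p g" and p0: "p None = 1" and v_pos: "\<And>i. 0 < v i"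
  shows "(\<forall>i. v i / p (Some i) = prodfun lam a i (\<lambda>k. a i k * v i / p k)) \<longleftrightarrow>
    (shareA a - mat 1) *v (\<chi> i. ln (p (Some i))) = uvec + Dmat *v (\<chi> i. ln (v i))"
proof -
  have "v i / p (Some i) = prodfun lam a i (\<lambda>k. a i k * v i / p k) \<longleftrightarrow>
      ((shareA a - mat 1) *v (\<chi> i. ln (p (Some i)))) $ i = (uvec + Dmat *v (\<chi> i. ln (v i))) $ i" for i
  proof -
    have "v i / p (Some i) = prodfun lam a i (\<lambda>k. a i k * v i / p k) \<longleftrightarrow>
        ln (v i) - ln (p (Some i)) = ln (prodfun lam a i (\<lambda>k. a i k * v i / p k))"
      using v_pos[of i] p_pos[of "Some i"] ln_prodfun_cost_share(1)[OF v_pos p_pos, of i]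
      by (simp add: ln_div flip: ln_inj_iff)
    also have "\<dots> \<longleftrightarrow> ln (v i) - ln (p (Some i)) = ln (lam i) + (\<Sum>k\<in>UNIV. xlogx (a i k))
        + (\<Sum>k\<in>UNIV. a i k) * ln (v i) - (\<Sum>j\<in>UNIV. a i (Some j) * ln (p (Some j)))"
      by (simp add: ln_prodfun_cost_share(2)[OF v_pos p_pos] sum_UNIV_option p0)
    also have "\<dots> \<longleftrightarrow> ((shareA a - mat 1) *v (\<chi> i. ln (p (Some i)))) $ i
        = (uvec + Dmat *v (\<chi> i. ln (v i))) $ i"
      unfolding vector_add_component shareA_minus_1_mult_vec Dmat_mult_vec uvec_def vec_lambda_beta
      by (auto simp: algebra_simps)
    finally show ?thesis .
  qed
  then show ?thesis by (simp add: vec_eq_iff)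
qed

lemma GE_revenue_pos:
  assumes GE: "GE p x y"
  shows "0 < revenue p y i"
proof (rule revenue_eq_solution_pos)
  show "revenue p y j = p None * a0 j + demand_map (revenue p y) j" for j
    by (rule GE_revenue_eq[OF GE])
  show "0 < p None * a0 j" for j
    using GE_labor_price_pos[OF GE] a0_pos[of j] by simp
qed

lemma GE_log_prices:
  assumes GE: "GE p x y" and p0: "p None = 1"
  shows "(shareA a - mat 1) *v (\<chi> i. ln (p (Some i))) = uvec + Dmat *v (\<chi> i. ln (revenue p y i))"
proof -
  have "revenue p y i / p (Some i) = prodfun lam a i (\<lambda>k. a i k * revenue p y i / p k)" for i
  proof -
    have "revenue p y i / p (Some i) = y (Some i)"
      using GE_price_pos[OF GE, of "Some i"] by (simp add: revenue_def)
    also have "\<dots> = prodfun lam a i (x (Some i))" by (rule GE_output[OF GE])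
    also have "x (Some i) = (\<lambda>k. a i k * revenue p y i / p k)"
      by (rule ext) (rule GE_input_demand[OF GE])
    finally show ?thesis .
  qed
  then show ?thesis
    using production_iff_log_prices[where p = p and v = "revenue p y"]
      GE_price_pos[OF GE] p0 GE_revenue_pos[OF GE] by blast
qed

lemma GE_normalized:
  assumes GE: "GE p x y" and p0: "p None = 1"
  shows GE_normalized_revenue_fixpoint: "revenue p y j = a0 j + demand_map (revenue p y) j"
    and GE_normalized_revenue_eq: "revenue p y j = a0 j + a0 j * (\<Sum>i\<in>UNIV. eps a i * revenue p y i)
      + (\<Sum>i\<in>UNIV. a i (Some j) * revenue p y i)"
    and GE_normalized_labor_demand: "(\<Sum>i\<in>UNIV. a i None * revenue p y i) = 1"
    and GE_normalized_log_prices: "(\<chi> i. ln (p (Some i))) =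
      matrix_inv (shareA a - mat 1) *v uvec
      + (matrix_inv (shareA a - mat 1) ** Dmat) *v (\<chi> i. ln (revenue p y i))"
proof -
  show fixpoint: "revenue p y j = a0 j + demand_map (revenue p y) j" for j
    using GE_revenue_eq[OF GE, of j] unfolding p0 by (simp only: mult_1)
  show "revenue p y j = a0 j + a0 j * (\<Sum>i\<in>UNIV. eps a i * revenue p y i)
      + (\<Sum>i\<in>UNIV. a i (Some j) * revenue p y i)"
    using fixpoint[of j] unfolding demand_map_def by (simp only: add.assoc)
  show "(\<Sum>i\<in>UNIV. a i None * revenue p y i) = 1"
    by (rule revenue_eq_labor_demand) (rule fixpoint)
  show "(\<chi> i. ln (p (Some i))) =
      matrix_inv (shareA a - mat 1) *v uvec
      + (matrix_inv (shareA a - mat 1) ** Dmat) *v (\<chi> i. ln (revenue p y i))"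
    using GE_log_prices[OF GE p0]
    by (simp add: invertible_mult_vec_eq_iff[OF invertible_shareA_minus_1]
        matrix_vector_right_distrib matrix_vector_mul_assoc)
qed

lemma GE_normalized_prices_unique:
  assumes GE: "GE p x y" and GE': "GE p' x' y'" and p0: "p None = 1" and p0': "p' None = 1"
  shows "revenue p y = revenue p' y'" and "p = p'"
proof -
  show rev: "revenue p y = revenue p' y'"
    using GE_normalized_revenue_fixpoint[OF GE p0] GE_normalized_revenue_fixpoint[OF GE' p0']
    by (rule revenue_eq_unique)
  have "(\<chi> i. ln (p (Some i))) = (\<chi> i. ln (p' (Some i)))"
    using GE_normalized_log_prices[OF GE p0] GE_normalized_log_prices[OF GE' p0'] rev by simp
  then have "ln (p (Some i)) = ln (p' (Some i))" for i
    by (metis vec_lambda_beta)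
  then have "p (Some i) = p' (Some i)" for i
    using ln_inj_iff[OF GE_price_pos[OF GE, of "Some i"] GE_price_pos[OF GE', of "Some i"]] by blast
  then have "p g = p' g" for g
    using p0 p0' by (cases g) simp_all
  then show "p = p'" ..
qed

lemma GE_unique_normalized:
  assumes GE: "GE p x y" and GE': "GE p' x' y'" and p0: "p None = 1" and p0': "p' None = 1"
  shows "p = p' \<and> x = x' \<and> y = y'"
proof -
  note rev = GE_normalized_prices_unique(1)[OF GE GE' p0 p0']
    and p_eq = GE_normalized_prices_unique(2)[OF GE GE' p0 p0']
  have income_eq: "income p x y = income p' x' y'"
    using GE_income[OF GE] GE_income[OF GE'] p0 p0' rev by simp
  have "x g k = x' g k" for g k
  proof (cases g)
    case None
    then show ?thesis
      using GE_no_leisure[OF GE] GE_no_leisure[OF GE'] GE_consumption_demand[OF GE]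
        GE_consumption_demand[OF GE'] income_eq p_eq by (cases k) auto
  qed (simp add: GE_input_demand[OF GE] GE_input_demand[OF GE'] rev[unfolded p_eq] p_eq)
  moreover have "y g = y' g" for g
  proof (cases g)
    case (Some i)
    then show ?thesis
      using fun_cong[OF rev, of i] GE_price_pos[OF GE, of g] p_eq by (simp add: revenue_def)
  qed (simp add: GE_labor_supply[OF GE] GE_labor_supply[OF GE'])
  ultimately show ?thesis using p_eq by auto
qed

lemma GE_scale:
  assumes GE: "GE p x y" and c_pos: "0 < c"
  shows "GE (\<lambda>g. c * p g) x y"
proof -
  have "\<forall>k. 0 \<le> c * p k" using GE_price_nonneg[OF GE] c_pos by simp
  then show ?thesis
    using GE unfolding general_equilibrium_def profit_scale dotp_scale income_scale
      mult_le_cancel_left_pos[OF c_pos] nonneg_def by blast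
qed

lemma GE_unique_up_to_scale:
  assumes GE: "GE p x y" and GE': "GE p' x' y'"
  shows "\<exists>c>0. p' = (\<lambda>g. c * p g) \<and> x' = x \<and> y' = y"
proof -
  have p0: "0 < p None" "0 < p' None"
    using GE_labor_price_pos GE GE' by auto
  have "GE (\<lambda>g. 1 / p None * p g) x y" "GE (\<lambda>g. 1 / p' None * p' g) x' y'"
    using GE_scale[OF GE, of "1 / p None"] GE_scale[OF GE', of "1 / p' None"] p0 by simp_all
  then have "(\<lambda>g. 1 / p None * p g) = (\<lambda>g. 1 / p' None * p' g) \<and> x = x' \<and> y = y'"
    using p0 by (intro GE_unique_normalized) simp_all
  then have normalized: "(\<lambda>g. 1 / p None * p g) = (\<lambda>g. 1 / p' None * p' g)"
    and "x = x'" "y = y'" by auto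
  have "p' = (\<lambda>g. p' None / p None * p g)"
  proof
    fix g
    show "p' g = p' None / p None * p g"
      using fun_cong[OF normalized, of g] p0 by (simp add: field_simps)
  qed
  then show ?thesis
    using p0 \<open>x = x'\<close> \<open>y = y'\<close> by (intro exI[of _ "p' None / p None"]) auto
qed

subsection \<open>Existence\<close>

definition eq_revenue :: "'n \<Rightarrow> real" where
  "eq_revenue = (SOME w. \<forall>j. w j = a0 j + demand_map w j)"

lemma eq_revenue_eq: "eq_revenue j = a0 j + demand_map eq_revenue j"
proof -
  have "\<forall>j. eq_revenue j = a0 j + demand_map eq_revenue j"
    unfolding eq_revenue_def by (rule someI_ex[OF revenue_eq_solvable])
  then show ?thesis ..
qed

lemma eq_revenue_pos: "0 < eq_revenue j"
  by (rule revenue_eq_solution_pos[OF eq_revenue_eq a0_pos])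

text \<open>Prices are recovered from the revenues through the log-linear production equations.\<close>
definition eq_price :: "'n option \<Rightarrow> real" where
  "eq_price g = (case g of None \<Rightarrow> 1
     | Some i \<Rightarrow> exp ((matrix_inv (shareA a - mat 1) *v (uvec + Dmat *v (\<chi> i. ln (eq_revenue i)))) $ i))"

definition eq_income :: real where
  "eq_income = 1 + (\<Sum>i\<in>UNIV. eps a i * eq_revenue i)"

definition eq_alloc :: "'n option \<Rightarrow> 'n option \<Rightarrow> real" where
  "eq_alloc g k = (case g of
       None \<Rightarrow> (case k of None \<Rightarrow> 0 | Some j \<Rightarrow> a0 j * eq_income / eq_price (Some j))
     | Some i \<Rightarrow> a i k * eq_revenue i / eq_price k)"

definition eq_output :: "'n option \<Rightarrow> real" where
  "eq_output g = (case g of None \<Rightarrow> 1 | Some i \<Rightarrow> eq_revenue i / eq_price (Some i))"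

lemma eq_price_pos: "0 < eq_price g"
  by (cases g) (simp_all add: eq_price_def)

lemma eq_alloc_None: "eq_alloc None = (\<lambda>k. case k of None \<Rightarrow> 0 | Some j \<Rightarrow> a0 j * eq_income / eq_price (Some j))"
  by (simp add: eq_alloc_def fun_eq_iff)

lemma eq_alloc_Some: "eq_alloc (Some i) = (\<lambda>k. a i k * eq_revenue i / eq_price k)"
  by (simp add: eq_alloc_def fun_eq_iff)

lemma eq_income_pos: "0 < eq_income"
  using eps_nonneg eq_revenue_pos
  by (simp add: eq_income_def add_pos_nonneg sum_nonneg less_imp_le)

lemma eq_output_prodfun: "eq_output (Some i) = prodfun lam a i (eq_alloc (Some i))"
proof -
  have "(shareA a - mat 1) *v (\<chi> i. ln (eq_price (Some i))) = uvec + Dmat *v (\<chi> i. ln (eq_revenue i))"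
    by (simp add: eq_price_def invertible_mult_vec_eq_iff[OF invertible_shareA_minus_1])
  then have "\<forall>i. eq_revenue i / eq_price (Some i)
      = prodfun lam a i (\<lambda>k. a i k * eq_revenue i / eq_price k)"
    using production_iff_log_prices[where p = eq_price and v = eq_revenue]
      eq_price_pos eq_revenue_pos by (simp add: eq_price_def)
  then show ?thesis by (simp add: eq_output_def eq_alloc_Some)
qed

lemma eq_profit: "profit eq_price i (eq_output (Some i)) (eq_alloc (Some i)) = eps a i * eq_revenue i"
proof -
  have "eq_price k \<noteq> 0" for k using eq_price_pos[of k] by simp
  then show ?thesis
    using eq_price_pos[of "Some i"]
    by (simp add: profit_def eq_output_def eq_alloc_Some dotp_cost_share_inputs eps_def algebra_simps)
qed

lemma eq_firm_optimal:
  assumes "nonneg xi"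
  shows "profit eq_price i (prodfun lam a i xi) xi \<le> profit eq_price i (eq_output (Some i)) (eq_alloc (Some i))"
proof -
  have "eq_revenue i / eq_price (Some i) = prodfun lam a i (\<lambda>k. a i k * eq_revenue i / eq_price k)"
    using eq_output_prodfun[of i] by (simp add: eq_output_def eq_alloc_Some)
  then have "eq_price (Some i) * prodfun lam a i (\<lambda>k. a i k * eq_revenue i / eq_price k) = eq_revenue i"
    using eq_price_pos[of "Some i"] by (simp add: field_simps)
  then show ?thesis
    unfolding eq_profit using cost_share_inputs_optimal eq_price_pos eq_revenue_pos assms by blast
qed

lemma eq_income_eq: "income eq_price eq_alloc eq_output = eq_income"
  by (simp add: income_def eq_profit eq_income_def eq_price_def)

lemma eq_household_optimal:
  assumes "nonneg z" "dotp eq_price z \<le> income eq_price eq_alloc eq_output"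
  shows "utility a0 z \<le> utility a0 (eq_alloc None)"
  using expenditure_share_bundle_optimal[OF eq_price_pos eq_income_pos] assms
  by (simp add: eq_income_eq eq_alloc_None)

lemma eq_market_clearing: "(\<Sum>j\<in>UNIV. eq_alloc j g) = eq_output g"
proof (cases g)
  case None
  have "(\<Sum>j\<in>UNIV. eq_alloc j None) = (\<Sum>i\<in>UNIV. a i None * eq_revenue i)"
    by (simp add: sum_UNIV_option eq_alloc_def eq_price_def)
  also have "\<dots> = 1"
    by (rule revenue_eq_labor_demand) (rule eq_revenue_eq)
  finally show ?thesis using None by (simp add: eq_output_def)
next
  case (Some j)
  have "(\<Sum>g\<in>UNIV. eq_alloc g (Some j))
      = (a0 j * eq_income + (\<Sum>i\<in>UNIV. a i (Some j) * eq_revenue i)) / eq_price (Some j)"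
    by (simp add: sum_UNIV_option eq_alloc_def add_divide_distrib sum_divide_distrib)
  also have "a0 j * eq_income + (\<Sum>i\<in>UNIV. a i (Some j) * eq_revenue i) = eq_revenue j"
    using eq_revenue_eq[of j] by (simp add: demand_map_def eq_income_def algebra_simps)
  finally show ?thesis using Some by (simp add: eq_output_def)
qed

lemma GE_exists: "\<exists>p x y. GE p x y"
proof -
  have "dotp eq_price (eq_alloc None) = eq_income"
    using eq_price_pos
    by (simp add: dotp_def sum_UNIV_option eq_alloc_def less_imp_neq[symmetric] a0_sum
        flip: sum_distrib_right)
  then have "GE eq_price eq_alloc eq_output"
    unfolding general_equilibrium_def
    using eq_price_pos eq_revenue_pos eq_income_pos a_nonneg a0_pos eq_output_prodfun
      eq_firm_optimal eq_household_optimal eq_market_clearing eq_income_eq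
    by (auto simp: nonneg_def eq_output_def eq_alloc_def less_imp_le split: option.split)
  then show ?thesis by blast
qed

end

lemma admissible_row_sum:
  assumes "admissible sec b a"
  shows "(\<Sum>k\<in>UNIV. a i k) = (\<Sum>l\<in>UNIV. b i l)"
proof -
  have "(\<Sum>j\<in>UNIV. a i (Some j)) = (\<Sum>l\<in>UNIV. \<Sum>j\<in>{j\<in>UNIV. sec j = l}. a i (Some j))"
    by (rule sum.group[symmetric]) auto
  also have "\<dots> = (\<Sum>l\<in>UNIV. b i (Some l))"
    using assms by (simp add: admissible_def)
  finally show ?thesis
    using assms by (simp add: admissible_def sum_UNIV_option)
qed

theorem mainTheorem2:
  fixes a0 :: "'n::finite \<Rightarrow> real"
    and sec :: "'n \<Rightarrow> 's::finite"
    and b :: "'n \<Rightarrow> 's option \<Rightarrow> real"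
    and a :: "'n \<Rightarrow> 'n option \<Rightarrow> real"
    and lam :: "'n \<Rightarrow> real"
  assumes a0_pos: "\<forall>j. 0 < a0 j"
    and a0_sum: "(\<Sum>j\<in>UNIV. a0 j) = 1"
    and b_nonneg: "\<forall>i l. 0 \<le> b i l"
    and b_sum: "\<forall>i. (\<Sum>l\<in>UNIV. b i l) \<le> 1"
    and b_labor: "\<forall>i. 0 < b i None"
    and b_some: "\<exists>i0 l. 0 < b i0 (Some l)"
    and adm: "admissible sec b a"
    and lam_pos: "\<forall>i. 0 < lam i"
  shows "(\<exists>p x y. general_equilibrium a0 lam a p x y) \<and>
         (\<forall>p x y p' x' y'. general_equilibrium a0 lam a p x y \<longrightarrow>
             general_equilibrium a0 lam a p' x' y' \<longrightarrow>
             (\<exists>c>0. p' = (\<lambda>g. c * p g) \<and> x' = x \<and> y' = y)) \<and>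
         (\<forall>p x y. general_equilibrium a0 lam a p x y \<longrightarrow> p None = 1 \<longrightarrow>
            (let v = (\<lambda>i. p (Some i) * y (Some i)) in
              (\<forall>j. v j = a0 j + a0 j * (\<Sum>i\<in>UNIV. eps a i * v i) + (\<Sum>i\<in>UNIV. a i (Some j) * v i)) \<and>
              (\<Sum>i\<in>UNIV. a i None * v i) = 1 \<and>
              (\<forall>i. profit p i (y (Some i)) (x (Some i)) = (1 - (\<Sum>j\<in>UNIV. a i j)) * v i \<and>
                   profit p i (y (Some i)) (x (Some i)) = (1 - (\<Sum>l\<in>UNIV. b i l)) * v i) \<and>
              invertible (shareA a - mat 1) \<and>
              (\<chi> i. ln (p (Some i))) =
                 matrix_inv (shareA a - mat 1) *v
                   (\<chi> i. ln (lam i) + (\<Sum>j\<in>UNIV. xlogx (a i j)))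
                 + (matrix_inv (shareA a - mat 1) ** (\<chi> i k. if i = k then (\<Sum>j\<in>UNIV. a i j) - 1 else 0))
                   *v (\<chi> i. ln (v i))))"
proof -
  have row_sum: "(\<Sum>k\<in>UNIV. a i k) = (\<Sum>l\<in>UNIV. b i l)" for i
    using adm by (rule admissible_row_sum)
  interpret economy a0 a lam
    by unfold_locales
      (use a0_pos a0_sum adm b_labor b_sum row_sum lam_pos in \<open>auto simp: admissible_def nonneg_def\<close>)
  show ?thesis
    apply (intro conjI allI impI)
    subgoal by (rule GE_exists)
    subgoal by (rule GE_unique_up_to_scale)
    subgoal premises GE for p x y
      unfolding Let_def revenue_def[symmetric] row_sum[symmetric] eps_def[symmetric]
        uvec_def[symmetric] Dmat_def[symmetric]
      using GE_normalized[OF GE] GE_profit[OF GE(1)] invertible_shareA_minus_1 by blast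
    done
qed

end
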